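(* For every countable linear order $Y$, $\mathsf{rk}(Y)=\mathsf{rk}(Y^* )$, where $Y^*$ denotes $Y$ with the reversed ordering.
   Context: Let $\mathcal F$ be the class of finite linear orders (language $\{<\}$); countable linear orders are the structures considered; substructures are suborders and $\mathsf{age}(X)$ is the set of finite suborders of $X$. For $A\le B$, $B$ is a prime extension of $A$ if $|B\setminus A|=1$; a realization of $B$ in $X$ (where $A\le X$) is $C\le X$ with $A\le C$ and an order-isomorphism $B\to C$ fixing $A$ pointwise. For $F\in\mathsf{age}(X)$ define by recursion: $\mathsf{rk}_X(F)\ge0$ always; $\mathsf{rk}_X(F)\ge\alpha+1$ iff every prime extension $B\in\mathcal F$ of $F$ has a realization $C$ in $X$ with $\mathsf{rk}_X(C)\ge\alpha$; for limit $\alpha$, $\mathsf{rk}_X(F)\ge\alpha$ iff $\mathsf{rk}_X(F)\ge\beta$ for all $\beta<\alpha$. $\mathsf{rk}_X(F)=\sup\{\alpha:\mathsf{rk}_X(F)\ge\alpha\}$ (or $\infty$), and $\mathsf{rk}(X)=\mathsf{rk}_X(\emptyset)$. *)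

theory Defs
  imports Main "HOL-Library.Countable_Set"
begin

definition strict_linorder_on :: "'a set \<Rightarrow> ('a \<Rightarrow> 'a \<Rightarrow> bool) \<Rightarrow> bool" where
  "strict_linorder_on X lt \<longleftrightarrow>
     (\<forall>x\<in>X. \<not> lt x x) \<and>
     (\<forall>x\<in>X. \<forall>y\<in>X. \<forall>z\<in>X. lt x y \<longrightarrow> lt y z \<longrightarrow> lt x z) \<and>
     (\<forall>x\<in>X. \<forall>y\<in>X. x \<noteq> y \<longrightarrow> lt x y \<or> lt y x)"

definition rev_order :: "('a \<Rightarrow> 'a \<Rightarrow> bool) \<Rightarrow> 'a \<Rightarrow> 'a \<Rightarrow> bool" where
  "rev_order lt = (\<lambda>x y. lt y x)"

text \<open>A prime extension B of the finite suborder (F, lt) of X: up to isomorphism over F,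
  B has carrier insert None (Some ` F) (F embedded via Some, None the new point),
  carries a strict linear order R, and (F,lt) is a suborder of B via Some.\<close>
definition prime_ext :: "('a \<Rightarrow> 'a \<Rightarrow> bool) \<Rightarrow> 'a set \<Rightarrow> ('a option \<Rightarrow> 'a option \<Rightarrow> bool) \<Rightarrow> bool" where
  "prime_ext lt F R \<longleftrightarrow>
     strict_linorder_on (insert None (Some ` F)) R \<and>
     (\<forall>x\<in>F. \<forall>y\<in>F. R (Some x) (Some y) \<longleftrightarrow> lt x y)"

text \<open>C = insert c F is a realization of the prime extension R in X: the map fixing F
  pointwise and sending the new point None to c is an order isomorphism onto C \<le> X.\<close>
definition realizes :: "'a set \<Rightarrow> ('a \<Rightarrow> 'a \<Rightarrow> bool) \<Rightarrow> 'a set \<Rightarrow> ('a option \<Rightarrow> 'a option \<Rightarrow> bool) \<Rightarrow> 'a \<Rightarrow> bool" where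
  "realizes X lt F R c \<longleftrightarrow> c \<in> X \<and> c \<notin> F \<and>
     (\<forall>x\<in>F. (R None (Some x) \<longleftrightarrow> lt c x) \<and> (R (Some x) None \<longleftrightarrow> lt x c))"

text \<open>rk_ge X lt \<alpha> F means rk_X(F) \<ge> \<alpha>, for \<alpha> an ordinal represented as an element of a
  well-ordered type. Defined by well-founded recursion on \<alpha>:
  successor \<alpha> = \<beta>+1: every prime extension has a realization C with rk_X(C) \<ge> \<beta>;
  otherwise (\<alpha> = 0 or limit): rk_X(F) \<ge> \<beta> for all \<beta> < \<alpha> (vacuously true for \<alpha> = 0).\<close>
definition rk_ge :: "'a set \<Rightarrow> ('a \<Rightarrow> 'a \<Rightarrow> bool) \<Rightarrow> 'o::wellorder \<Rightarrow> 'a set \<Rightarrow> bool" where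
  "rk_ge X lt = wfrec {(\<beta>, \<alpha>). \<beta> < \<alpha>}
     (\<lambda>rec \<alpha> F.
        if (\<exists>\<beta><\<alpha>. \<forall>\<gamma>. \<not> (\<beta> < \<gamma> \<and> \<gamma> < \<alpha>))
        then (let \<beta> = (THE \<beta>. \<beta> < \<alpha> \<and> (\<forall>\<gamma>. \<not> (\<beta> < \<gamma> \<and> \<gamma> < \<alpha>))) in
              \<forall>R. prime_ext lt F R \<longrightarrow> (\<exists>c. realizes X lt F R c \<and> rec \<beta> (insert c F)))
        else (\<forall>\<beta><\<alpha>. rec \<beta> F))"

definition rank_ge :: "'a set \<Rightarrow> ('a \<Rightarrow> 'a \<Rightarrow> bool) \<Rightarrow> 'o::wellorder \<Rightarrow> bool" where
  "rank_ge X lt \<alpha> = rk_ge X lt \<alpha> {}"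

end

theory Submission
  imports Defs
begin

text \<open>By induction on the ordinal, the rank of a finite suborder F of X depends on the
  order of X only through the question which prime extensions of F have realizations with a
  given property. Reversing the order of both X and a prime extension is an involution that
  preserves realizations, so X and X* have the same ranks.\<close>

definition immediate_predecessor :: "'o::linorder \<Rightarrow> 'o \<Rightarrow> bool" where
  "immediate_predecessor \<beta> \<alpha> \<longleftrightarrow> \<beta> < \<alpha> \<and> (\<forall>\<gamma>. \<not> (\<beta> < \<gamma> \<and> \<gamma> < \<alpha>))"

lemma the_immediate_predecessor:
  "immediate_predecessor \<beta> \<alpha> \<Longrightarrow> (THE \<beta>. immediate_predecessor \<beta> \<alpha>) = \<beta>"
  unfolding immediate_predecessor_def by (intro the_equality) (auto, metis linorder_neqE)

definition every_prime_ext_realized ::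
    "'a set \<Rightarrow> ('a \<Rightarrow> 'a \<Rightarrow> bool) \<Rightarrow> 'a set \<Rightarrow> ('a \<Rightarrow> bool) \<Rightarrow> bool" where
  "every_prime_ext_realized X lt F P \<longleftrightarrow>
     (\<forall>R. prime_ext lt F R \<longrightarrow> (\<exists>c. realizes X lt F R c \<and> P c))"

lemma rk_ge_fixpoint:
  "rk_ge X lt (\<alpha>::'o::wellorder) F \<longleftrightarrow>
     (if \<exists>\<beta>. immediate_predecessor \<beta> \<alpha>
      then every_prime_ext_realized X lt F
             (\<lambda>c. rk_ge X lt (THE \<beta>. immediate_predecessor \<beta> \<alpha>) (insert c F))
      else (\<forall>\<beta><\<alpha>. rk_ge X lt \<beta> F))"
proof -
  let ?G = "\<lambda>rec (\<alpha>::'o) F.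
     if \<exists>\<beta>. immediate_predecessor \<beta> \<alpha>
     then every_prime_ext_realized X lt F
            (\<lambda>c. rec (THE \<beta>. immediate_predecessor \<beta> \<alpha>) (insert c F))
     else (\<forall>\<beta><\<alpha>. rec \<beta> F)"
  have rk_ge_wfrec: "rk_ge X lt = wfrec {(\<beta>, \<alpha>). \<beta> < \<alpha>} ?G"
    unfolding rk_ge_def immediate_predecessor_def every_prime_ext_realized_def Let_def ..
  have adm: "adm_wf {(\<beta>, \<alpha>). \<beta> < \<alpha>} ?G"
    unfolding adm_wf_def
  proof (intro allI impI)
    fix f g :: "'o \<Rightarrow> 'a set \<Rightarrow> bool" and \<alpha>
    assume "\<forall>\<beta>. (\<beta>, \<alpha>) \<in> {(\<beta>, \<alpha>). \<beta> < \<alpha>} \<longrightarrow> f \<beta> = g \<beta>"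
    then have agree: "f \<beta> = g \<beta>" if "\<beta> < \<alpha>" for \<beta>
      using that by simp
    show "?G f \<alpha> = ?G g \<alpha>"
    proof (cases "\<exists>\<beta>. immediate_predecessor \<beta> \<alpha>")
      case True
      then obtain \<beta> where pred: "immediate_predecessor \<beta> \<alpha>" ..
      then have "(THE \<beta>. immediate_predecessor \<beta> \<alpha>) = \<beta>"
        by (rule the_immediate_predecessor)
      moreover have "\<beta> < \<alpha>"
        using pred by (simp add: immediate_predecessor_def)
      ultimately show ?thesis
        using True by (simp add: agree)
    next
      case False
      then show ?thesis by (simp add: agree)
    qed
  qed
  have "rk_ge X lt = ?G (rk_ge X lt)"
    unfolding rk_ge_wfrec using wfrec_fixpoint[OF wf adm] .
  then show ?thesis
    by (rule fun_cong[OF fun_cong])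
qed

lemma rk_ge_succ:
  assumes "immediate_predecessor \<beta> \<alpha>"
  shows "rk_ge X lt \<alpha> F \<longleftrightarrow> every_prime_ext_realized X lt F (\<lambda>c. rk_ge X lt \<beta> (insert c F))"
  using assms by (subst rk_ge_fixpoint) (auto simp: the_immediate_predecessor)

lemma rk_ge_not_succ:
  assumes "\<nexists>\<beta>. immediate_predecessor \<beta> \<alpha>"
  shows "rk_ge X lt \<alpha> F \<longleftrightarrow> (\<forall>\<beta><\<alpha>. rk_ge X lt \<beta> F)"
  using assms by (subst rk_ge_fixpoint) simp

lemma rk_ge_cong:
  fixes \<alpha> :: "'o::wellorder"
  assumes "\<And>F P. every_prime_ext_realized X lt F P \<longleftrightarrow> every_prime_ext_realized X' lt' F P"
  shows "rk_ge X lt \<alpha> F \<longleftrightarrow> rk_ge X' lt' \<alpha> F"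
proof (induction \<alpha> arbitrary: F rule: less_induct)
  case (less \<alpha>)
  show ?case
  proof (cases "\<exists>\<beta>. immediate_predecessor \<beta> \<alpha>")
    case True
    then obtain \<beta> where pred: "immediate_predecessor \<beta> \<alpha>" ..
    then have "\<beta> < \<alpha>"
      by (simp add: immediate_predecessor_def)
    with pred show ?thesis
      by (simp add: rk_ge_succ less.IH assms)
  next
    case False
    then show ?thesis
      by (simp add: rk_ge_not_succ less.IH)
  qed
qed

lemma rev_order_rev_order [simp]: "rev_order (rev_order lt) = lt"
  by (simp add: rev_order_def)

lemma strict_linorder_on_rev_order:
  "strict_linorder_on X (rev_order lt) \<longleftrightarrow> strict_linorder_on X lt"
  unfolding strict_linorder_on_def rev_order_def by blast

lemma prime_ext_rev_order:
  "prime_ext (rev_order lt) F R \<longleftrightarrow> prime_ext lt F (rev_order R)"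
  unfolding prime_ext_def by (auto simp: strict_linorder_on_rev_order) (auto simp: rev_order_def)

lemma realizes_rev_order:
  "realizes X (rev_order lt) F R c \<longleftrightarrow> realizes X lt F (rev_order R) c"
  unfolding realizes_def rev_order_def by blast

lemma every_prime_ext_realized_rev_order:
  "every_prime_ext_realized X (rev_order lt) F P \<longleftrightarrow> every_prime_ext_realized X lt F P"
  unfolding every_prime_ext_realized_def
  by (metis prime_ext_rev_order realizes_rev_order rev_order_rev_order)

theorem proposition6p8:
  fixes Y :: "'a set" and lt :: "'a \<Rightarrow> 'a \<Rightarrow> bool" and \<alpha> :: "'o::wellorder"
  assumes "countable Y" and "strict_linorder_on Y lt"
  shows "rank_ge Y lt \<alpha> \<longleftrightarrow> rank_ge Y (rev_order lt) \<alpha>"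
  unfolding rank_ge_def
  by (rule rk_ge_cong) (rule every_prime_ext_realized_rev_order[symmetric])

end
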